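(* The theory $\mathsf{Seq}$ is $\Sigma$-complete: for every $\Sigma$-sentence $\phi$ of $\mathcal{L}$, if $\mathfrak{S}\models\phi$ then $\mathsf{Seq}\vdash\phi$.
   Context: $\mathcal{L}=\{e,\vdash,\circ\}$ with $e$ a constant and $\vdash$ (infix), $\circ$ binary function symbols. $\mathsf{Seq}$ has axioms: ($\mathsf{Seq}_1$) $\forall xy[x\vdash y\neq e]$; ($\mathsf{Seq}_2$) $\forall x_1x_2y_1y_2[x_1\vdash x_2=y_1\vdash y_2\rightarrow(x_1=y_1\wedge x_2=y_2)]$; ($\mathsf{Seq}_3$) $\forall x[x\circ e=x]$; ($\mathsf{Seq}_4$) $\forall xyz[x\circ(y\vdash z)=(x\circ y)\vdash z]$; ($\mathsf{Seq}_5$) $\forall x[x=e\vee\exists yz[x=y\vdash z]]$. Sequences: $()$ is a sequence and $(s_1,\ldots,s_n)$ ($n>0$) is a sequence whenever the $s_i$ are. The standard structure $\mathfrak{S}$ has universe all sequences, $e^{\mathfrak{S}}=()$, $(s_1,\ldots,s_n)\vdash^{\mathfrak{S}}t=(s_1,\ldots,s_n,t)$, $\circ^{\mathfrak{S}}$ concatenation. $s\sqsubseteq t$ abbreviates $\exists y[s\circ y=t]$, and $\forall x\sqsubseteq t[\phi]$ abbreviates $\forall x[x\sqsubseteq t\rightarrow\phi]$. $\Sigma$-formulas are defined inductively: atomic formulas and their negations; $s\sqsubseteq t$ and $\neg(s\sqsubseteq t)$ for terms $s,t$; conjunctions and disjunctions of $\Sigma$-formulas; $\exists x[\phi]$ for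 $\Sigma$-formulas $\phi$; $\forall x\sqsubseteq t[\phi]$ for $\Sigma$-formulas $\phi$ and terms $t$ not containing $x$. *)

theory Defs
  imports Main
begin

datatype tm = Var nat | E | Cons tm tm | Cat tm tm
  (* Cons s t represents s \<turnstile> t ; Cat s t represents s \<circ> t *)

datatype fm = Eq tm tm | Neg fm | Conj fm fm | Disj fm fm | Imp fm fm | Ex fm | All fm

fun liftt :: "nat \<Rightarrow> tm \<Rightarrow> tm" where
  "liftt k (Var i) = (if i < k then Var i else Var (Suc i))"
| "liftt k E = E"
| "liftt k (Cons s t) = Cons (liftt k s) (liftt k t)"
| "liftt k (Cat s t) = Cat (liftt k s) (liftt k t)"

fun liftf :: "nat \<Rightarrow> fm \<Rightarrow> fm" where
  "liftf k (Eq s t) = Eq (liftt k s) (liftt k t)"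
| "liftf k (Neg p) = Neg (liftf k p)"
| "liftf k (Conj p q) = Conj (liftf k p) (liftf k q)"
| "liftf k (Disj p q) = Disj (liftf k p) (liftf k q)"
| "liftf k (Imp p q) = Imp (liftf k p) (liftf k q)"
| "liftf k (Ex p) = Ex (liftf (Suc k) p)"
| "liftf k (All p) = All (liftf (Suc k) p)"

fun substt :: "tm \<Rightarrow> tm \<Rightarrow> nat \<Rightarrow> tm" where
  "substt (Var i) u k = (if i < k then Var i else if i = k then u else Var (i - 1))"
| "substt E u k = E"
| "substt (Cons s t) u k = Cons (substt s u k) (substt t u k)"
| "substt (Cat s t) u k = Cat (substt s u k) (substt t u k)"

fun substf :: "fm \<Rightarrow> tm \<Rightarrow> nat \<Rightarrow> fm" where
  "substf (Eq s t) u k = Eq (substt s u k) (substt t u k)"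
| "substf (Neg p) u k = Neg (substf p u k)"
| "substf (Conj p q) u k = Conj (substf p u k) (substf q u k)"
| "substf (Disj p q) u k = Disj (substf p u k) (substf q u k)"
| "substf (Imp p q) u k = Imp (substf p u k) (substf q u k)"
| "substf (Ex p) u k = Ex (substf p (liftt 0 u) (Suc k))"
| "substf (All p) u k = All (substf p (liftt 0 u) (Suc k))"

text \<open>Closedness: all free indices below k; sentences are formulas with closedf 0.\<close>
fun closedt :: "nat \<Rightarrow> tm \<Rightarrow> bool" where
  "closedt k (Var i) = (i < k)"
| "closedt k E = True"
| "closedt k (Cons s t) = (closedt k s \<and> closedt k t)"
| "closedt k (Cat s t) = (closedt k s \<and> closedt k t)"

fun closedf :: "nat \<Rightarrow> fm \<Rightarrow> bool" where
  "closedf k (Eq s t) = (closedt k s \<and> closedt k t)"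
| "closedf k (Neg p) = closedf k p"
| "closedf k (Conj p q) = (closedf k p \<and> closedf k q)"
| "closedf k (Disj p q) = (closedf k p \<and> closedf k q)"
| "closedf k (Imp p q) = (closedf k p \<and> closedf k q)"
| "closedf k (Ex p) = closedf (Suc k) p"
| "closedf k (All p) = closedf (Suc k) p"

definition sub :: "tm \<Rightarrow> tm \<Rightarrow> fm" where
  "sub s t = Ex (Eq (Cat (liftt 0 s) (Var 0)) (liftt 0 t))"

text \<open>\<forall>x \<sqsubseteq> t [p] := \<forall>x[x \<sqsubseteq> t \<rightarrow> p]; here x is bound index 0 of p and t is a term
  of the outer context (so t cannot contain the bound x).\<close>
definition ball :: "tm \<Rightarrow> fm \<Rightarrow> fm" where
  "ball t p = All (Imp (sub (Var 0) (liftt 0 t)) p)"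

inductive sigma :: "fm \<Rightarrow> bool" where
  sig_eq: "sigma (Eq s t)"
| sig_neq: "sigma (Neg (Eq s t))"
| sig_sub: "sigma (sub s t)"
| sig_nsub: "sigma (Neg (sub s t))"
| sig_conj: "sigma p \<Longrightarrow> sigma q \<Longrightarrow> sigma (Conj p q)"
| sig_disj: "sigma p \<Longrightarrow> sigma q \<Longrightarrow> sigma (Disj p q)"
| sig_ex: "sigma p \<Longrightarrow> sigma (Ex p)"
| sig_ball: "sigma p \<Longrightarrow> sigma (ball t p)"

datatype seq = Sq "seq list"

fun scons :: "seq \<Rightarrow> seq \<Rightarrow> seq" where
  "scons (Sq xs) t = Sq (xs @ [t])"

fun scat :: "seq \<Rightarrow> seq \<Rightarrow> seq" where
  "scat (Sq xs) (Sq ys) = Sq (xs @ ys)"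

fun evalt :: "(nat \<Rightarrow> seq) \<Rightarrow> tm \<Rightarrow> seq" where
  "evalt env (Var i) = env i"
| "evalt env E = Sq []"
| "evalt env (Cons s t) = scons (evalt env s) (evalt env t)"
| "evalt env (Cat s t) = scat (evalt env s) (evalt env t)"

fun sat :: "(nat \<Rightarrow> seq) \<Rightarrow> fm \<Rightarrow> bool" where
  "sat env (Eq s t) = (evalt env s = evalt env t)"
| "sat env (Neg p) = (\<not> sat env p)"
| "sat env (Conj p q) = (sat env p \<and> sat env q)"
| "sat env (Disj p q) = (sat env p \<or> sat env q)"
| "sat env (Imp p q) = (sat env p \<longrightarrow> sat env q)"
| "sat env (Ex p) = (\<exists>x. sat (case_nat x env) p)"
| "sat env (All p) = (\<forall>x. sat (case_nat x env) p)"

definition std_models :: "fm \<Rightarrow> bool" where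
  "std_models p = (\<forall>env. sat env p)"

inductive nd :: "fm list \<Rightarrow> fm \<Rightarrow> bool" where
  Assm: "p \<in> set G \<Longrightarrow> nd G p"
| ImpI: "nd (p # G) q \<Longrightarrow> nd G (Imp p q)"
| ImpE: "nd G (Imp p q) \<Longrightarrow> nd G p \<Longrightarrow> nd G q"
| ConjI: "nd G p \<Longrightarrow> nd G q \<Longrightarrow> nd G (Conj p q)"
| ConjE1: "nd G (Conj p q) \<Longrightarrow> nd G p"
| ConjE2: "nd G (Conj p q) \<Longrightarrow> nd G q"
| DisjI1: "nd G p \<Longrightarrow> nd G (Disj p q)"
| DisjI2: "nd G q \<Longrightarrow> nd G (Disj p q)"
| DisjE: "nd G (Disj p q) \<Longrightarrow> nd (p # G) r \<Longrightarrow> nd (q # G) r \<Longrightarrow> nd G r"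
| NegI: "nd (p # G) q \<Longrightarrow> nd (p # G) (Neg q) \<Longrightarrow> nd G (Neg p)"
| NegE: "nd G p \<Longrightarrow> nd G (Neg p) \<Longrightarrow> nd G q"
| Classical: "nd (Neg p # G) q \<Longrightarrow> nd (Neg p # G) (Neg q) \<Longrightarrow> nd G p"
| AllI: "nd (map (liftf 0) G) p \<Longrightarrow> nd G (All p)"
| AllE: "nd G (All p) \<Longrightarrow> nd G (substf p t 0)"
| ExI: "nd G (substf p t 0) \<Longrightarrow> nd G (Ex p)"
| ExE: "nd G (Ex p) \<Longrightarrow> nd (p # map (liftf 0) G) (liftf 0 q) \<Longrightarrow> nd G q"
| Refl: "nd G (Eq t t)"
| Subst: "nd G (Eq s t) \<Longrightarrow> nd G (substf p s 0) \<Longrightarrow> nd G (substf p t 0)"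

definition seq_axioms :: "fm list" where
  "seq_axioms =
    [ All (All (Neg (Eq (Cons (Var 1) (Var 0)) E))),
      All (All (All (All (Imp (Eq (Cons (Var 3) (Var 2)) (Cons (Var 1) (Var 0)))
                             (Conj (Eq (Var 3) (Var 1)) (Eq (Var 2) (Var 0))))))),
      All (Eq (Cat (Var 0) E) (Var 0)),
      All (All (All (Eq (Cat (Var 2) (Cons (Var 1) (Var 0))) (Cons (Cat (Var 2) (Var 1)) (Var 0))))),
      All (Disj (Eq (Var 0) E) (Ex (Ex (Eq (Var 2) (Cons (Var 1) (Var 0)))))) ]"

definition Seq_proves :: "fm \<Rightarrow> bool" where
  "Seq_proves p = nd seq_axioms p"

end

theory Submission
  imports Defs "HOL-Library.Sublist"
begin

text \<open>Every sequence c has a numeral quot c, a closed term denoting it.  Seq proves each closed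
  term equal to the numeral of its value (Seq3, Seq4) and proves distinct numerals distinct
  (Seq1, Seq2), which settles true atomic sentences and their negations.  The remaining cases
  rest on the fact that a sequence has only finitely many prefixes: by induction on c, using
  Seq5 for y and then Seq3, Seq4 and Seq2, Seq proves that x \<circ> y = c implies the
  disjunction of the equations x = a over the prefixes a of c.  A true Sigma-sentence is then
  derived by induction on its number of connectives, instantiating an existential quantifier by
  the numeral of a witness and a bounded quantifier by the numerals of all prefixes.\<close>

lemma substt_liftt [simp]: "substt (liftt k a) b k = a"
  by (induction a) auto

lemma substt_liftt_Suc [simp]:
  "j \<le> k \<Longrightarrow> substt (liftt j a) (liftt j b) (Suc k) = liftt j (substt a b k)"
  by (induction a) auto

lemma closedt_liftt [simp]: "j \<le> k \<Longrightarrow> closedt (Suc k) (liftt j s) = closedt k s"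
  by (induction s) auto

lemma liftt_closed [simp]: "closedt k t \<Longrightarrow> liftt k t = t"
  by (induction t) auto

lemma substt_closed [simp]: "closedt k t \<Longrightarrow> substt t u k = t"
  by (induction t) auto

lemma closedt_substt: "closedt (Suc k) s \<Longrightarrow> closedt k u \<Longrightarrow> closedt k (substt s u k)"
  by (induction s) auto

lemma closedt_liftt_Suc: "closedt k u \<Longrightarrow> closedt (Suc k) (liftt j u)"
  by (induction u) auto

lemma closedf_substf: "closedf (Suc k) p \<Longrightarrow> closedt k u \<Longrightarrow> closedf k (substf p u k)"
  by (induction p arbitrary: k u) (auto simp: closedt_substt closedt_liftt_Suc)

lemma substt_Var_Suc: "closedt (Suc k) s \<Longrightarrow> substt s (Var (Suc k)) k = liftt k s"
  by (induction s) auto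

lemma substf_Var_Suc: "closedf (Suc k) p \<Longrightarrow> substf p (Var (Suc k)) k = liftf k p"
  by (induction p arbitrary: k) (auto simp: substt_Var_Suc)

lemma substf_sub: "substf (sub s t) u k = sub (substt s u k) (substt t u k)"
  by (simp add: sub_def)

lemma substf_ball: "substf (ball t p) u k = ball (substt t u k) (substf p (liftt 0 u) (Suc k))"
  by (simp add: ball_def sub_def)

lemma closedf_sub [simp]: "closedf k (sub s t) \<longleftrightarrow> closedt k s \<and> closedt k t"
  by (simp add: sub_def)

lemma closedf_ball [simp]: "closedf k (ball t p) \<longleftrightarrow> closedt k t \<and> closedf (Suc k) p"
  by (simp add: ball_def)

lemma sigma_substf: "sigma p \<Longrightarrow> sigma (substf p u k)"
proof (induction arbitrary: u k rule: sigma.induct)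
  case (sig_sub s t) then show ?case by (simp only: substf_sub sigma.intros)
next
  case (sig_nsub s t) then show ?case by (simp only: substf.simps substf_sub sigma.intros)
next
  case (sig_ball p t) then show ?case by (simp only: substf_ball sigma.intros)
qed (auto intro: sigma.intros)

fun connectives :: "fm \<Rightarrow> nat" where
  "connectives (Eq s t) = 0"
| "connectives (Neg p) = Suc (connectives p)"
| "connectives (Conj p q) = Suc (connectives p + connectives q)"
| "connectives (Disj p q) = Suc (connectives p + connectives q)"
| "connectives (Imp p q) = Suc (connectives p + connectives q)"
| "connectives (Ex p) = Suc (connectives p)"
| "connectives (All p) = Suc (connectives p)"

lemma connectives_substf [simp]: "connectives (substf p u k) = connectives p"
  by (induction p arbitrary: u k) auto

definition env_insert :: "nat \<Rightarrow> seq \<Rightarrow> (nat \<Rightarrow> seq) \<Rightarrow> nat \<Rightarrow> seq" where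
  "env_insert k v env i = (if i < k then env i else if i = k then v else env (i - 1))"

lemma env_insert_0: "env_insert 0 v env = case_nat v env"
  by (rule ext) (auto simp: env_insert_def split: nat.split)

lemma env_insert_Suc: "env_insert (Suc k) v (case_nat x env) = case_nat x (env_insert k v env)"
  by (rule ext) (auto simp: env_insert_def split: nat.split)

lemma evalt_liftt_0 [simp]: "evalt (case_nat x env) (liftt 0 u) = evalt env u"
  by (induction u) auto

lemma evalt_substt: "evalt env (substt s u k) = evalt (env_insert k (evalt env u) env) s"
  by (induction s) (auto simp: env_insert_def)

lemma sat_substf: "sat env (substf p u k) = sat (env_insert k (evalt env u) env) p"
  by (induction p arbitrary: env u k) (auto simp: evalt_substt env_insert_Suc)

lemma sat_sub: "sat env (sub s t) \<longleftrightarrow> (\<exists>y. scat (evalt env s) y = evalt env t)"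
  by (simp add: sub_def)

lemma sat_ball:
  "sat env (ball t p) \<longleftrightarrow> (\<forall>x y. scat x y = evalt env t \<longrightarrow> sat (case_nat x env) p)"
  by (auto simp: ball_def sub_def)

lemma nd_mono: "nd G p \<Longrightarrow> set G \<subseteq> set G' \<Longrightarrow> nd G' p"
proof (induction arbitrary: G' rule: nd.induct)
  case (AllI G p) then show ?case by (metis image_mono list.set_map nd.AllI)
next
  case (ExE G p q) then show ?case
    by (metis image_mono list.set_map nd.ExE insert_mono list.simps(15))
next
  case (DisjE G p q r) then show ?case by (metis nd.DisjE insert_mono list.simps(15))
next
  case (NegI p G q) then show ?case by (metis nd.NegI insert_mono list.simps(15))
next
  case (Classical p G q) then show ?case by (metis nd.Classical insert_mono list.simps(15))
next
  case (Subst G s t p) then show ?case by (blast intro: nd.Subst)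
qed (auto intro: nd.intros simp: subset_iff)

lemma nd_cut: "nd (q # G) p \<Longrightarrow> nd G q \<Longrightarrow> nd G p"
  by (meson nd.ImpE nd.ImpI)

lemma ExE_Assm: "nd (p # map (liftf 0) G) (liftf 0 q) \<Longrightarrow> Ex p \<in> set G \<Longrightarrow> nd G q"
  by (rule ExE[OF Assm])

abbreviation falsum :: fm where
  "falsum \<equiv> Neg (Eq E E)"

lemma falsum_elim: "nd G falsum \<Longrightarrow> nd G r"
  by (rule NegE[OF Refl])

fun disjs :: "fm list \<Rightarrow> fm" where
  "disjs [] = falsum"
| "disjs (p # ps) = Disj p (disjs ps)"

lemma liftf_disjs [simp]: "liftf k (disjs ps) = disjs (map (liftf k) ps)"
  by (induction ps) auto

lemma disjs_I: "p \<in> set ps \<Longrightarrow> nd G p \<Longrightarrow> nd G (disjs ps)"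
  by (induction ps) (auto intro: DisjI1 DisjI2)

lemma disjs_E: "nd G (disjs ps) \<Longrightarrow> (\<And>p. p \<in> set ps \<Longrightarrow> nd (p # G) r) \<Longrightarrow> nd G r"
proof (induction ps arbitrary: G)
  case Nil
  then show ?case by (simp add: falsum_elim)
next
  case (Cons p ps)
  have "nd (disjs ps # G) r"
  proof (rule Cons.IH)
    show "nd (disjs ps # G) (disjs ps)" by (rule Assm) simp
    show "nd (q # disjs ps # G) r" if "q \<in> set ps" for q
      using Cons.prems(2)[of q] that by (auto elim: nd_mono)
  qed
  with Cons.prems show ?case by (auto intro: DisjE)
qed

lemma disjs_mono: "set ps \<subseteq> set qs \<Longrightarrow> nd G (disjs ps) \<Longrightarrow> nd G (disjs qs)"
  by (erule disjs_E) (meson Assm disjs_I list.set_intros(1) subsetD)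

lemma eq_subst: "nd G (Eq s t) \<Longrightarrow> nd G a \<Longrightarrow> a = substf p s 0 \<Longrightarrow> b = substf p t 0 \<Longrightarrow> nd G b"
  using Subst by blast

lemma eq_sym: "nd G (Eq s t) \<Longrightarrow> nd G (Eq t s)"
  by (rule eq_subst[where p = "Eq (Var 0) (liftt 0 s)", OF _ Refl]) auto

lemma eq_trans: "nd G (Eq s t) \<Longrightarrow> nd G (Eq t u) \<Longrightarrow> nd G (Eq s u)"
  by (rule eq_subst[where p = "Eq (liftt 0 s) (Var 0)"]) auto

lemma Cons_cong: "nd G (Eq a c) \<Longrightarrow> nd G (Eq b d) \<Longrightarrow> nd G (Eq (Cons a b) (Cons c d))"
proof -
  assume ac: "nd G (Eq a c)" and bd: "nd G (Eq b d)"
  have "nd G (Eq (Cons a b) (Cons c b))"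
    by (rule eq_subst[where p = "Eq (Cons (liftt 0 a) (liftt 0 b)) (Cons (Var 0) (liftt 0 b))",
          OF ac Refl]) auto
  moreover have "nd G (Eq (Cons c b) (Cons c d))"
    by (rule eq_subst[where p = "Eq (Cons (liftt 0 c) (liftt 0 b)) (Cons (liftt 0 c) (Var 0))",
          OF bd Refl]) auto
  ultimately show ?thesis by (rule eq_trans)
qed

lemma Cat_cong: "nd G (Eq a c) \<Longrightarrow> nd G (Eq b d) \<Longrightarrow> nd G (Eq (Cat a b) (Cat c d))"
proof -
  assume ac: "nd G (Eq a c)" and bd: "nd G (Eq b d)"
  have "nd G (Eq (Cat a b) (Cat c b))"
    by (rule eq_subst[where p = "Eq (Cat (liftt 0 a) (liftt 0 b)) (Cat (Var 0) (liftt 0 b))",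
          OF ac Refl]) auto
  moreover have "nd G (Eq (Cat c b) (Cat c d))"
    by (rule eq_subst[where p = "Eq (Cat (liftt 0 c) (liftt 0 b)) (Cat (liftt 0 c) (Var 0))",
          OF bd Refl]) auto
  ultimately show ?thesis by (rule eq_trans)
qed

lemma neq_sym: "nd G (Neg (Eq s t)) \<Longrightarrow> nd G (Neg (Eq t s))"
proof -
  assume st: "nd G (Neg (Eq s t))"
  have "nd (Eq t s # G) (Eq s t)" by (rule eq_sym, rule Assm) simp
  moreover have "nd (Eq t s # G) (Neg (Eq s t))" using st by (rule nd_mono) auto
  ultimately show ?thesis by (rule NegI)
qed

lemma map_liftf_seq_axioms [simp]: "map (liftf 0) seq_axioms = seq_axioms"
  by (simp add: seq_axioms_def)

abbreviation seq_ctx :: "fm list \<Rightarrow> bool" where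
  "seq_ctx G \<equiv> set seq_axioms \<subseteq> set G"

lemma seq_ctx_lift: "seq_ctx G \<Longrightarrow> seq_ctx (p # map (liftf 0) G)"
  by (metis image_mono list.set_map map_liftf_seq_axioms set_subset_Cons subset_trans)

lemma seq_cons_neq_E: "seq_ctx G \<Longrightarrow> nd G (Neg (Eq (Cons a b) E))"
proof -
  assume "seq_ctx G"
  then have "nd G (All (All (Neg (Eq (Cons (Var 1) (Var 0)) E))))"
    by (intro Assm) (auto simp: seq_axioms_def)
  from AllE[OF AllE[OF this, of a, simplified], of b] show ?thesis by simp
qed

lemma seq_cons_inj:
  "seq_ctx G \<Longrightarrow> nd G (Imp (Eq (Cons a b) (Cons c d)) (Conj (Eq a c) (Eq b d)))"
proof -
  assume "seq_ctx G"
  then have "nd G (All (All (All (All (Imp (Eq (Cons (Var 3) (Var 2)) (Cons (Var 1) (Var 0)))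
                             (Conj (Eq (Var 3) (Var 1)) (Eq (Var 2) (Var 0))))))))"
    by (intro Assm) (auto simp: seq_axioms_def)
  from AllE[OF AllE[OF AllE[OF AllE[OF this, of a, simplified], of b, simplified],
        of c, simplified], of d]
  show ?thesis by (simp add: numeral_eq_Suc)
qed

lemma seq_cat_E: "seq_ctx G \<Longrightarrow> nd G (Eq (Cat a E) a)"
proof -
  assume "seq_ctx G"
  then have "nd G (All (Eq (Cat (Var 0) E) (Var 0)))"
    by (intro Assm) (auto simp: seq_axioms_def)
  from AllE[OF this, of a] show ?thesis by simp
qed

lemma seq_cat_cons: "seq_ctx G \<Longrightarrow> nd G (Eq (Cat a (Cons b c)) (Cons (Cat a b) c))"
proof -
  assume "seq_ctx G"
  then have "nd G (All (All (All
      (Eq (Cat (Var 2) (Cons (Var 1) (Var 0))) (Cons (Cat (Var 2) (Var 1)) (Var 0))))))"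
    by (intro Assm) (auto simp: seq_axioms_def)
  from AllE[OF AllE[OF AllE[OF this, of a, simplified], of b, simplified], of c]
  show ?thesis by (simp add: numeral_eq_Suc)
qed

lemma seq_cases: "seq_ctx G \<Longrightarrow>
  nd G (Disj (Eq a E) (Ex (Ex (Eq (liftt 0 (liftt 0 a)) (Cons (Var 1) (Var 0))))))"
proof -
  assume "seq_ctx G"
  then have "nd G (All (Disj (Eq (Var 0) E) (Ex (Ex (Eq (Var 2) (Cons (Var 1) (Var 0)))))))"
    by (intro Assm) (auto simp: seq_axioms_def)
  from AllE[OF this, of a] show ?thesis by (simp add: numeral_eq_Suc)
qed

lemma Cons_neqI:
  assumes G: "seq_ctx G" and neq: "nd G (Neg (Eq a c)) \<or> nd G (Neg (Eq b d))"
  shows "nd G (Neg (Eq (Cons a b) (Cons c d)))"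
proof -
  let ?H = "Eq (Cons a b) (Cons c d)"
  have inj: "nd (?H # G) (Conj (Eq a c) (Eq b d))"
    by (rule ImpE[OF seq_cons_inj Assm]) (use G in auto)
  from neq show ?thesis
  proof
    assume "nd G (Neg (Eq a c))"
    then have "nd (?H # G) (Neg (Eq a c))" by (rule nd_mono) auto
    then show ?thesis by (rule NegI[OF ConjE1[OF inj]])
  next
    assume "nd G (Neg (Eq b d))"
    then have "nd (?H # G) (Neg (Eq b d))" by (rule nd_mono) auto
    then show ?thesis by (rule NegI[OF ConjE2[OF inj]])
  qed
qed

lemma Cat_E_eq:
  assumes G: "seq_ctx G" and xy: "nd G (Eq (Cat x y) c)" and y: "nd G (Eq y E)"
  shows "nd G (Eq x c)"
proof -
  have "nd G (Eq (Cat x E) (Cat x y))" by (rule Cat_cong[OF Refl eq_sym[OF y]])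
  then have "nd G (Eq (Cat x E) c)" using xy by (rule eq_trans)
  then show ?thesis by (rule eq_trans[OF eq_sym[OF seq_cat_E[OF G]]])
qed

section \<open>Numerals\<close>

fun quot :: "seq \<Rightarrow> tm" where
  "quot (Sq xs) = foldl (\<lambda>t x. Cons t (quot x)) E xs"

lemma quot_Nil [simp]: "quot (Sq []) = E"
  by simp

lemma quot_snoc [simp]: "quot (Sq (xs @ [x])) = Cons (quot (Sq xs)) (quot x)"
  by simp

declare quot.simps [simp del]

lemma seq_snoc_induct:
  assumes "P (Sq [])" and "\<And>xs x. P (Sq xs) \<Longrightarrow> P x \<Longrightarrow> P (Sq (xs @ [x]))"
  shows "P a"
proof (induction a)
  case (Sq xs)
  then show ?case by (induction xs rule: rev_induct) (auto intro: assms)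
qed

lemma closedt_quot [simp]: "closedt k (quot a)"
  by (induction a rule: seq_snoc_induct) auto

lemma evalt_quot [simp]: "evalt env (quot a) = a"
  by (induction a rule: seq_snoc_induct) auto

lemma sat_substf_quot: "sat env (substf p (quot a) 0) = sat (case_nat a env) p"
  by (simp add: sat_substf env_insert_0)

lemma quot_scat: "seq_ctx G \<Longrightarrow> nd G (Eq (Cat (quot a) (quot b)) (quot (scat a b)))"
proof (induction b rule: seq_snoc_induct)
  case 1
  then show ?case using seq_cat_E by (cases a) simp
next
  case (2 ys y)
  obtain xs where a: "a = Sq xs" by (cases a)
  have "nd G (Eq (Cat (quot a) (quot (Sq (ys @ [y])))) (Cons (Cat (quot a) (quot (Sq ys))) (quot y)))"
    using seq_cat_cons[OF 2(3)] by simp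
  moreover have "nd G (Eq (Cons (Cat (quot a) (quot (Sq ys))) (quot y))
                          (Cons (quot (scat a (Sq ys))) (quot y)))"
    by (rule Cons_cong[OF 2(1)[OF 2(3)] Refl])
  ultimately show ?case
    using a quot_snoc[of "xs @ ys" y] by (auto intro: eq_trans)
qed

lemma eq_quot_evalt: "seq_ctx G \<Longrightarrow> closedt 0 s \<Longrightarrow> nd G (Eq s (quot (evalt env s)))"
proof (induction s)
  case (Cons s t)
  then show ?case using Cons_cong[OF Cons(1) Cons(2)] by (cases "evalt env s") simp
next
  case (Cat s t)
  then have "nd G (Eq (Cat s t) (Cat (quot (evalt env s)) (quot (evalt env t))))"
    by (simp add: Cat_cong)
  then show ?case using quot_scat[OF Cat(3)] by (simp add: eq_trans)
qed (auto intro: Refl)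

lemma quot_neq: "seq_ctx G \<Longrightarrow> a \<noteq> b \<Longrightarrow> nd G (Neg (Eq (quot a) (quot b)))"
proof (induction a arbitrary: b rule: measure_induct_rule[where f = size])
  case (less a)
  obtain xs ys where a: "a = Sq xs" and b: "b = Sq ys" by (cases a, cases b)
  show ?case
  proof (cases xs rule: rev_exhaust)
    case Nil
    with less.prems a b obtain ys' y where "ys = ys' @ [y]" by (metis rev_exhaust)
    with Nil a b show ?thesis using neq_sym[OF seq_cons_neq_E[OF less(2)]] by simp
  next
    case (snoc xs' x)
    show ?thesis
    proof (cases ys rule: rev_exhaust)
      case Nil
      then show ?thesis using a b snoc seq_cons_neq_E[OF less(2)] by simp
    next
      case ys: (snoc ys' y)
      have "Sq xs' \<noteq> Sq ys' \<or> x \<noteq> y" using less.prems(2) a b snoc ys by auto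
      then have "nd G (Neg (Eq (quot (Sq xs')) (quot (Sq ys')))) \<or> nd G (Neg (Eq (quot x) (quot y)))"
        using less.IH less.prems(1) a snoc by auto
      then show ?thesis using a b snoc ys Cons_neqI[OF less.prems(1)] by simp
    qed
  qed
qed

section \<open>The prefixes of a numeral\<close>

text \<open>Case analysis on y by Seq5; in the second case y is u \<turnstile> v with u, v the two
  innermost bound variables, so x \<circ> y = (x \<circ> u) \<turnstile> v by Seq4.\<close>
lemma cat_eq_cases:
  assumes G: "seq_ctx G" and c: "closedt 0 c" and xy: "Eq (Cat x y) c \<in> set G"
    and empty: "nd (Eq x c # G) r"
    and snoc: "\<And>G'. seq_ctx G' \<Longrightarrow>
      nd G' (Eq (Cons (Cat (liftt 0 (liftt 0 x)) (Var 1)) (Var 0)) c) \<Longrightarrow>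
      nd G' (liftf 0 (liftf 0 r))"
  shows "nd G r"
proof -
  let ?x = "liftt 0 (liftt 0 x)"
  let ?Q = "Eq (liftt 0 (liftt 0 y)) (Cons (Var 1) (Var 0))"
  have "nd G (Disj (Eq y E) (Ex (Ex ?Q)))" by (rule seq_cases[OF G])
  moreover have "nd (Eq y E # G) r"
  proof -
    have "seq_ctx (Eq y E # G)" using G by auto
    moreover have "nd (Eq y E # G) (Eq (Cat x y) c)" by (rule Assm) (simp add: xy)
    moreover have "nd (Eq y E # G) (Eq y E)" by (rule Assm) simp
    ultimately have "nd (Eq y E # G) (Eq x c)" by (rule Cat_E_eq)
    moreover have "nd (Eq x c # Eq y E # G) r" using empty by (rule nd_mono) auto
    ultimately show ?thesis by (rule nd_cut[rotated])
  qed
  moreover have "nd (Ex (Ex ?Q) # G) r"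
  proof -
    define G1 where "G1 = Ex ?Q # map (liftf 0) (Ex (Ex ?Q) # G)"
    define G2 where "G2 = ?Q # map (liftf 0) G1"
    have "seq_ctx (Ex (Ex ?Q) # G)" using G by auto
    then have "seq_ctx G1" unfolding G1_def by (rule seq_ctx_lift)
    then have G2: "seq_ctx G2" unfolding G2_def by (rule seq_ctx_lift)
    have "nd G2 ?Q" by (rule Assm) (simp add: G2_def)
    then have "nd G2 (Eq (Cat ?x (Cons (Var 1) (Var 0))) (Cat ?x (liftt 0 (liftt 0 y))))"
      by (auto intro: Cat_cong Refl eq_sym)
    moreover have "nd G2 (Eq (Cat ?x (liftt 0 (liftt 0 y))) c)"
      using xy c by (intro Assm) (force simp: G2_def G1_def)
    ultimately have "nd G2 (Eq (Cat ?x (Cons (Var 1) (Var 0))) c)" by (rule eq_trans)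
    then have "nd G2 (Eq (Cons (Cat ?x (Var 1)) (Var 0)) c)"
      by (rule eq_trans[OF eq_sym[OF seq_cat_cons[OF G2]]])
    then have "nd G2 (liftf 0 (liftf 0 r))" by (rule snoc[OF G2])
    then have "nd G1 (liftf 0 r)" unfolding G2_def by (rule ExE_Assm) (simp add: G1_def)
    then show ?thesis unfolding G1_def by (rule ExE_Assm) simp
  qed
  ultimately show ?thesis by (rule DisjE)
qed

lemma cat_eq_quot_prefixes: "seq_ctx G \<Longrightarrow>
  nd (Eq (Cat x y) (quot (Sq cs)) # G) (disjs [Eq x (quot (Sq as)). as \<leftarrow> prefixes cs])"
proof (induction cs arbitrary: x y G rule: rev_induct)
  case Nil
  show ?case
  proof (rule cat_eq_cases)
    show "nd (Eq x (quot (Sq [])) # Eq (Cat x y) (quot (Sq [])) # G)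
            (disjs [Eq x (quot (Sq as)). as \<leftarrow> prefixes []])"
      by (rule disjs_I[of "Eq x (quot (Sq []))"]) (auto intro: Assm)
    fix G' assume "seq_ctx G'"
      and "nd G' (Eq (Cons (Cat (liftt 0 (liftt 0 x)) (Var 1)) (Var 0)) (quot (Sq [])))"
    then show "nd G' (liftf 0 (liftf 0 (disjs [Eq x (quot (Sq as)). as \<leftarrow> prefixes []])))"
      by (auto intro: NegE[OF _ seq_cons_neq_E])
  qed (use Nil in auto)
next
  case (snoc d cs)
  show ?case
  proof (rule cat_eq_cases)
    show "nd (Eq x (quot (Sq (cs @ [d]))) # Eq (Cat x y) (quot (Sq (cs @ [d]))) # G)
            (disjs [Eq x (quot (Sq as)). as \<leftarrow> prefixes (cs @ [d])])"
      by (rule disjs_I[of "Eq x (quot (Sq (cs @ [d])))"]) (auto intro: Assm)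
    fix G' assume G': "seq_ctx G'"
      and "nd G' (Eq (Cons (Cat (liftt 0 (liftt 0 x)) (Var 1)) (Var 0)) (quot (Sq (cs @ [d]))))"
    then have "nd G' (Conj (Eq (Cat (liftt 0 (liftt 0 x)) (Var 1)) (quot (Sq cs)))
                           (Eq (Var 0) (quot d)))"
      by (auto intro: ImpE[OF seq_cons_inj])
    then have "nd G' (Eq (Cat (liftt 0 (liftt 0 x)) (Var 1)) (quot (Sq cs)))" by (rule ConjE1)
    with snoc.IH[OF G'] have "nd G' (disjs [Eq (liftt 0 (liftt 0 x)) (quot (Sq as)). as \<leftarrow> prefixes cs])"
      by (rule nd_cut)
    then show "nd G' (liftf 0 (liftf 0 (disjs [Eq x (quot (Sq as)). as \<leftarrow> prefixes (cs @ [d])])))"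
      by (auto elim: disjs_mono[rotated])
  qed (use snoc in auto)
qed

lemma cat_eq_quot_elim:
  assumes G: "seq_ctx G" and xy: "nd G (Eq (Cat x y) (quot c))"
    and cases: "\<And>a b. scat a b = c \<Longrightarrow> nd (Eq x (quot a) # G) r"
  shows "nd G r"
proof -
  obtain cs where c: "c = Sq cs" by (cases c)
  have "nd G (disjs [Eq x (quot (Sq as)). as \<leftarrow> prefixes cs])"
    using cat_eq_quot_prefixes[OF G] xy c by (blast intro: nd_cut)
  then show ?thesis
  proof (rule disjs_E)
    fix p assume "p \<in> set [Eq x (quot (Sq as)). as \<leftarrow> prefixes cs]"
    then obtain as bs where "p = Eq x (quot (Sq as))" and "cs = as @ bs"
      by (auto simp: prefix_def)
    then show "nd (p # G) r" using cases[of "Sq as" "Sq bs"] c by simp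
  qed
qed

section \<open>Sigma-completeness\<close>

lemma provable_eq:
  assumes G: "seq_ctx G" and s: "closedt 0 s" and t: "closedt 0 t"
    and st: "evalt env s = evalt env t"
  shows "nd G (Eq s t)"
proof -
  have "nd G (Eq t (quot (evalt env s)))" using eq_quot_evalt[OF G t, of env] st by simp
  then show ?thesis by (rule eq_trans[OF eq_quot_evalt[OF G s] eq_sym])
qed

lemma provable_neq:
  assumes G: "seq_ctx G" and s: "closedt 0 s" and t: "closedt 0 t"
    and st: "evalt env s \<noteq> evalt env t"
  shows "nd G (Neg (Eq s t))"
proof (rule NegI)
  let ?G = "Eq s t # G"
  have G': "seq_ctx ?G" using G by auto
  have "nd ?G (Eq s (quot (evalt env t)))"
    by (rule eq_trans[OF Assm eq_quot_evalt[OF G' t]]) simp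
  then show "nd ?G (Eq (quot (evalt env s)) (quot (evalt env t)))"
    by (rule eq_trans[OF eq_sym[OF eq_quot_evalt[OF G' s]]])
  show "nd ?G (Neg (Eq (quot (evalt env s)) (quot (evalt env t))))"
    using quot_neq[OF G st] by (rule nd_mono) auto
qed

lemma provable_sub:
  assumes G: "seq_ctx G" and s: "closedt 0 s" and t: "closedt 0 t"
    and y: "scat (evalt env s) y = evalt env t"
  shows "nd G (sub s t)"
proof -
  have "nd G (Eq (Cat s (quot y)) t)" using s t y by (intro provable_eq[OF G]) auto
  then have "nd G (Ex (Eq (Cat s (Var 0)) t))" using s t by (intro ExI[where t = "quot y"]) simp
  then show ?thesis using s t by (simp add: sub_def)
qed

lemma provable_not_sub:
  assumes G: "seq_ctx G" and s: "closedt 0 s" and t: "closedt 0 t"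
    and st: "\<And>y. scat (evalt env s) y \<noteq> evalt env t"
  shows "nd G (Neg (sub s t))"
proof -
  let ?P = "Ex (Eq (Cat s (Var 0)) t)"
  define C where "C = Eq (Cat s (Var 0)) t # map (liftf 0) (?P # G)"
  have "seq_ctx (?P # G)" using G by auto
  then have C: "seq_ctx C" unfolding C_def by (rule seq_ctx_lift)
  have "nd C falsum"
  proof (rule cat_eq_quot_elim[OF C])
    show "nd C (Eq (Cat s (Var 0)) (quot (evalt env t)))"
      by (rule eq_trans[OF Assm eq_quot_evalt[OF C t]]) (simp add: C_def)
    fix a b assume "scat a b = evalt env t"
    then have "evalt env s \<noteq> evalt env (quot a)" using st by auto
    moreover have "seq_ctx (Eq s (quot a) # C)" using C by auto
    ultimately have neq: "nd (Eq s (quot a) # C) (Neg (Eq s (quot a)))"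
      using s by (intro provable_neq) auto
    show "nd (Eq s (quot a) # C) falsum" by (rule NegE[OF Assm neq]) simp
  qed
  then have "nd C (liftf 0 falsum)" by simp
  then have "nd (?P # G) falsum" unfolding C_def by (rule ExE_Assm) simp
  then have "nd G (Neg ?P)" by (rule NegI[OF Refl, rotated])
  then show ?thesis using s t by (simp add: sub_def)
qed

lemma provable_ball:
  assumes t: "closedt 0 t" and q: "closedf 1 q"
    and instances: "\<And>a b. scat a b = evalt env t \<Longrightarrow> Seq_proves (substf q (quot a) 0)"
  shows "Seq_proves (ball t q)"
proof -
  let ?P = "Ex (Eq (Cat (Var 1) (Var 0)) t)"
  define C where "C = Eq (Cat (Var 1) (Var 0)) t # map (liftf 0) (?P # seq_axioms)"
  have C: "seq_ctx C" unfolding C_def by (auto intro: seq_ctx_lift)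
  have "nd C (liftf 0 q)"
  proof (rule cat_eq_quot_elim[OF C])
    show "nd C (Eq (Cat (Var 1) (Var 0)) (quot (evalt env t)))"
      by (rule eq_trans[OF Assm eq_quot_evalt[OF C t]]) (simp add: C_def)
    fix a b assume "scat a b = evalt env t"
    then have "nd seq_axioms (substf q (quot a) 0)" using instances by (simp add: Seq_proves_def)
    then have "nd (Eq (Var 1) (quot a) # C) (substf q (quot a) 0)"
      by (rule nd_mono) (auto simp: C_def)
    moreover have "nd (Eq (Var 1) (quot a) # C) (Eq (quot a) (Var 1))"
      by (rule eq_sym, rule Assm) simp
    ultimately show "nd (Eq (Var 1) (quot a) # C) (liftf 0 q)"
      using substf_Var_Suc[of 0 q] q by (auto intro: eq_subst)
  qed
  then have "nd (?P # seq_axioms) q" unfolding C_def by (rule ExE_Assm) simp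
  then have "nd (map (liftf 0) seq_axioms) (Imp ?P q)" by (simp add: ImpI)
  then have "Seq_proves (All (Imp ?P q))" unfolding Seq_proves_def by (rule AllI)
  then show ?thesis using t by (simp add: ball_def sub_def)
qed

lemma sigma_complete: "sigma p \<Longrightarrow> closedf 0 p \<Longrightarrow> sat env p \<Longrightarrow> Seq_proves p"
proof (induction "connectives p" arbitrary: p env rule: less_induct)
  case less
  have quot_instance: "Seq_proves (substf q (quot a) 0)"
    if "connectives q < connectives p" "sigma q" "closedf 1 q" "sat (case_nat a env) q" for q a
    using that by (intro less.hyps) (auto simp: sigma_substf closedf_substf sat_substf_quot)
  from less.prems(1) show ?case
  proof cases
    case (sig_eq s t)
    then show ?thesis using less.prems by (auto simp: Seq_proves_def intro: provable_eq[OF order_refl])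
  next
    case (sig_neq s t)
    then show ?thesis using less.prems by (auto simp: Seq_proves_def intro: provable_neq[OF order_refl])
  next
    case (sig_sub s t)
    then show ?thesis using less.prems
      by (auto simp: Seq_proves_def sat_sub intro: provable_sub[OF order_refl])
  next
    case (sig_nsub s t)
    then show ?thesis using less.prems
      by (auto simp: Seq_proves_def sat_sub intro: provable_not_sub[OF order_refl])
  next
    case (sig_conj q r)
    then show ?thesis using less by (auto simp: Seq_proves_def intro!: ConjI)
  next
    case (sig_disj q r)
    then show ?thesis using less by (auto simp: Seq_proves_def intro: DisjI1 DisjI2)
  next
    case (sig_ex q)
    then obtain a where "sat (case_nat a env) q" using less.prems by auto
    then have "Seq_proves (substf q (quot a) 0)" using sig_ex less.prems by (intro quot_instance) auto
    then show ?thesis using sig_ex by (auto simp: Seq_proves_def intro: ExI)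
  next
    case (sig_ball q t)
    then have t: "closedt 0 t" and q: "closedf 1 q" using less.prems by auto
    have "Seq_proves (ball t q)"
    proof (rule provable_ball[where env = env, OF t q])
      fix a b assume "scat a b = evalt env t"
      then have "sat (case_nat a env) q" using less.prems(3) sig_ball by (auto simp: sat_ball)
      then show "Seq_proves (substf q (quot a) 0)"
        using sig_ball q by (intro quot_instance) (auto simp: ball_def sub_def)
    qed
    then show ?thesis using sig_ball by simp
  qed
qed

theorem corollary1:
  assumes "sigma p" and "closedf 0 p" and "std_models p"
  shows "Seq_proves p"
  using sigma_complete[OF assms(1,2)] assms(3) unfolding std_models_def by blast

end
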